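(* Let $M,N\in\mathbb{R}^{(k+n)\times(k+n)}$ be symmetric and assume there exists $\bar Z\in\mathbb{R}^{n\times k}$ with $\begin{bmatrix} I\\ \bar Z\end{bmatrix}^\top N\begin{bmatrix} I\\ \bar Z\end{bmatrix}>0$ (here $I$ is the $k\times k$ identity). Then the following are equivalent: (I) $\begin{bmatrix} I\\ Z\end{bmatrix}^\top M\begin{bmatrix} I\\ Z\end{bmatrix}\ge 0$ for all $Z\in\mathbb{R}^{n\times k}$ with $\begin{bmatrix} I\\ Z\end{bmatrix}^\top N\begin{bmatrix} I\\ Z\end{bmatrix}\ge 0$; (II) $\begin{bmatrix} I\\ Z\end{bmatrix}^\top M\begin{bmatrix} I\\ Z\end{bmatrix}\ge 0$ for all $Z\in\mathbb{R}^{n\times k}$ with $\begin{bmatrix} I\\ Z\end{bmatrix}^\top N\begin{bmatrix} I\\ Z\end{bmatrix}> 0$; (III) there exists a scalar $\alpha\ge 0$ such that $M-\alpha N\ge 0$.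
   Context: For symmetric matrices, $\ge 0$ means positive semidefinite and $>0$ means positive definite. *)

theory Defs
  imports "HOL-Analysis.Analysis"
begin

definition symmetric_mat :: "real^'m^'m \<Rightarrow> bool" where
  "symmetric_mat A \<longleftrightarrow> transpose A = A"

definition psd :: "real^'m^'m \<Rightarrow> bool" where
  "psd A \<longleftrightarrow> symmetric_mat A \<and> (\<forall>x. 0 \<le> x \<bullet> (A *v x))"

definition pd :: "real^'m^'m \<Rightarrow> bool" where
  "pd A \<longleftrightarrow> symmetric_mat A \<and> (\<forall>x. x \<noteq> 0 \<longrightarrow> 0 < x \<bullet> (A *v x))"

text \<open>The block matrix [I; Z] of size (k+n) x k; the row index type is the sum 'k + 'n,
  rows Inl i form the k x k identity, rows Inr j are the rows of Z.\<close>

definition stackI :: "real^'k^'n \<Rightarrow> real^'k^('k + 'n)" where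
  "stackI Z = (\<chi> r. case r of Inl i \<Rightarrow> mat 1 $ i | Inr j \<Rightarrow> Z $ j)"

definition quadform :: "real^('k + 'n)^('k + 'n) \<Rightarrow> real^'k^'n \<Rightarrow> real^'k^'k" where
  "quadform M Z = transpose (stackI Z) ** M ** stackI Z"

end

theory Submission
  imports Defs
begin

text \<open>
  (I) implies (II) trivially, and (III) implies (I) because
  \<open>[I; Z]\<^sup>T M [I; Z] = [I; Z]\<^sup>T (M - \<alpha> N) [I; Z] + \<alpha> [I; Z]\<^sup>T N [I; Z]\<close>.
  For (II) implies (III), one first shows that every vector \<open>v\<close> with \<open>v\<^sup>T N v > 0\<close>
  satisfies \<open>v\<^sup>T M v \<ge> 0\<close>: if the upper block \<open>x\<close> of \<open>v\<close> is nonzero, a rank-one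
  update of \<open>Z\<^sub>b\<close> yields some \<open>Z\<close> with \<open>[I; Z] x = v\<close> and \<open>[I; Z]\<^sup>T N [I; Z] > 0\<close>;
  if \<open>x = 0\<close>, \<open>v\<close> is a limit of such vectors. The vector S-lemma then provides \<open>\<alpha>\<close>: it is
  the infimum of \<open>v\<^sup>T M v / v\<^sup>T N v\<close> over \<open>v\<^sup>T N v > 0\<close>. On the cone \<open>v\<^sup>T N v = 0\<close> the
  hypothesis extends by continuity, and for \<open>u\<^sup>T N u < 0\<close> one evaluates at the two
  zeros of \<open>t \<mapsto> (u + t v)\<^sup>T N (u + t v)\<close>, which lie on either side of \<open>0\<close>.
\<close>

definition qform :: "real^'m^'m \<Rightarrow> real^'m \<Rightarrow> real" where
  "qform A v = v \<bullet> (A *v v)"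

lemma symmetric_mat_inner_commute:
  assumes "symmetric_mat A"
  shows "u \<bullet> (A *v v) = v \<bullet> (A *v u)"
proof -
  have "u \<bullet> (A *v v) = u \<bullet> (transpose A *v v)"
    using assms by (simp add: symmetric_mat_def)
  also have "\<dots> = (v v* A) \<bullet> u" by (simp add: inner_commute)
  also have "\<dots> = v \<bullet> (A *v u)" by (rule dot_lmul_matrix)
  finally show ?thesis .
qed

lemma qform_add_scaleR:
  assumes "symmetric_mat A"
  shows "qform A (u + t *\<^sub>R v) = qform A u + 2 * t * (u \<bullet> (A *v v)) + t\<^sup>2 * qform A v"
  using symmetric_mat_inner_commute[OF assms, of v u]
  by (simp add: qform_def algebra_simps inner_add_left inner_add_right power2_eq_square)

lemma qform_diff_scaleR: "qform (A - a *\<^sub>R B) v = qform A v - a * qform B v"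
  by (simp add: qform_def matrix_vector_mult_diff_rdistrib inner_diff_right
      scaleR_matrix_vector_assoc[symmetric])

lemma qform_congruence: "x \<bullet> ((transpose P ** A ** P) *v x) = qform A (P *v x)"
proof -
  have "x \<bullet> ((transpose P ** A ** P) *v x) = x \<bullet> (transpose P *v (A *v (P *v x)))"
    by (simp add: matrix_vector_mul_assoc matrix_mul_assoc)
  also have "\<dots> = ((A *v (P *v x)) v* P) \<bullet> x" by (simp add: inner_commute)
  also have "\<dots> = (A *v (P *v x)) \<bullet> (P *v x)" by (rule dot_lmul_matrix)
  finally show ?thesis by (simp add: qform_def inner_commute)
qed

lemma qform_quadform: "x \<bullet> (quadform A Z *v x) = qform A (stackI Z *v x)"
  unfolding quadform_def by (rule qform_congruence)

lemma symmetric_mat_congruence: "symmetric_mat A \<Longrightarrow> symmetric_mat (transpose P ** A ** P)"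
  by (simp add: symmetric_mat_def matrix_transpose_mul matrix_mul_assoc)

lemma symmetric_mat_diff_scaleR:
  "symmetric_mat A \<Longrightarrow> symmetric_mat B \<Longrightarrow> symmetric_mat (A - a *\<^sub>R B)"
  unfolding symmetric_mat_def by (simp add: vec_eq_iff transpose_def)

lemma psd_iff_qform: "psd A \<longleftrightarrow> symmetric_mat A \<and> (\<forall>x. 0 \<le> qform A x)"
  by (simp add: psd_def qform_def)

lemma pd_imp_psd: "pd A \<Longrightarrow> psd A"
  unfolding pd_def psd_def by (metis inner_zero_left order_refl less_imp_le)

lemma qform_tendsto_along_ray:
  "((\<lambda>t. qform A (v + t *\<^sub>R w)) \<longlongrightarrow> qform A v) (at_right 0)"
proof -
  have "((\<lambda>t. v + t *\<^sub>R w) \<longlongrightarrow> v) (at_right 0)"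
    by (intro tendsto_eq_intros) auto
  then show ?thesis
    unfolding qform_def
    by (intro tendsto_intros bounded_linear.tendsto[OF matrix_vector_mul_bounded_linear])
qed

lemma qform_nonneg_if_eventually_nonneg:
  assumes "\<forall>\<^sub>F t in at_right 0. 0 \<le> qform A (v + t *\<^sub>R w)"
  shows "0 \<le> qform A v"
  using tendsto_lowerbound[OF qform_tendsto_along_ray assms] by simp

lemma eventually_qform_pos:
  assumes "0 < qform A v"
  shows "\<forall>\<^sub>F t in at_right 0. 0 < qform A (v + t *\<^sub>R w)"
  using order_tendstoD(1)[OF qform_tendsto_along_ray assms] .

lemma affine_nonneg_between:
  fixes c0 c1 t1 t2 :: real
  assumes "t1 < 0" "0 < t2" "0 \<le> c0 + c1 * t1" "0 \<le> c0 + c1 * t2"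
  shows "0 \<le> c0"
proof (cases "c1 \<ge> 0")
  case True
  then have "c1 * t1 \<le> 0" using assms(1) by (simp add: mult_nonneg_nonpos)
  then show ?thesis using assms(3) by linarith
next
  case False
  then have "c1 * t2 \<le> 0" using assms(2) by (simp add: mult_nonpos_nonneg)
  then show ?thesis using assms(4) by linarith
qed

lemma quadratic_roots_opposite_signs:
  fixes a b c :: real
  assumes a: "0 < a" and c: "c < 0"
  obtains t1 t2 where "t1 < 0" "0 < t2"
    and "c + 2 * b * t1 + a * t1\<^sup>2 = 0" "c + 2 * b * t2 + a * t2\<^sup>2 = 0"
proof -
  define D where "D = sqrt (b\<^sup>2 - a * c)"
  have ac: "a * c < 0" using a c by (simp add: mult_pos_neg)
  then have "0 \<le> b\<^sup>2 - a * c" using zero_le_power2[of b] by linarith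
  then have D2: "D\<^sup>2 = b\<^sup>2 - a * c" unfolding D_def by simp
  have "sqrt (b\<^sup>2) < D" unfolding D_def using ac by (intro real_sqrt_less_mono) linarith
  then have Db: "\<bar>b\<bar> < D" by simp
  have root: "c + 2 * b * t + a * t\<^sup>2 = 0" if "a * t + b = D \<or> a * t + b = - D" for t
  proof -
    have "a * (c + 2 * b * t + a * t\<^sup>2) = (a * t + b)\<^sup>2 - D\<^sup>2"
      using D2 by (simp add: power2_eq_square algebra_simps)
    also have "\<dots> = 0" using that by auto
    finally show ?thesis using a by simp
  qed
  show ?thesis
  proof (rule that[of "(- b - D) / a" "(- b + D) / a"])
    show "(- b - D) / a < 0" "0 < (- b + D) / a" using Db a by (simp_all add: divide_neg_pos)
    show "c + 2 * b * ((- b - D) / a) + a * ((- b - D) / a)\<^sup>2 = 0"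
      using a by (intro root) (simp add: field_simps)
    show "c + 2 * b * ((- b + D) / a) + a * ((- b + D) / a)\<^sup>2 = 0"
      using a by (intro root) (simp add: field_simps)
  qed
qed

lemma binary_quadratic_pos:
  fixes l a r p s \<beta> L :: real
  assumes l: "0 < l" and rl: "r\<^sup>2 < a * l"
    and \<beta>: "\<bar>\<beta>\<bar> \<le> r * p" and L: "l * p\<^sup>2 \<le> L" and nz: "s \<noteq> 0 \<or> 0 < p"
  shows "0 < L + 2 * s * \<beta> + s\<^sup>2 * a"
proof (cases "s = 0")
  case True
  then have "0 < l * p\<^sup>2" using nz l by simp
  then show ?thesis using True L by simp
next
  case False
  have "\<bar>s * \<beta>\<bar> \<le> \<bar>s\<bar> * (r * p)" using \<beta> by (simp add: abs_mult mult_left_mono)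
  then have s\<beta>: "- (\<bar>s\<bar> * (r * p)) \<le> s * \<beta>" by linarith
  have eq: "l * (l * p\<^sup>2 - 2 * \<bar>s\<bar> * r * p + a * s\<^sup>2) = (l * p - \<bar>s\<bar> * r)\<^sup>2 + s\<^sup>2 * (a * l - r\<^sup>2)"
    by (simp add: power2_eq_square algebra_simps abs_mult_self_eq)
  have "0 < s\<^sup>2 * (a * l - r\<^sup>2)" using False rl by simp
  then have "0 < l * (l * p\<^sup>2 - 2 * \<bar>s\<bar> * r * p + a * s\<^sup>2)"
    unfolding eq using zero_le_power2[of "l * p - \<bar>s\<bar> * r"] by linarith
  then have "0 < l * p\<^sup>2 - 2 * \<bar>s\<bar> * r * p + a * s\<^sup>2" using l by (simp add: zero_less_mult_iff)
  then show ?thesis using s\<beta> L by (simp add: algebra_simps)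
qed

context
  fixes M N :: "real^'m^'m"
  assumes sym_M: "symmetric_mat M" and sym_N: "symmetric_mat N"
    and nonneg_on_pos: "\<And>v. 0 < qform N v \<Longrightarrow> 0 \<le> qform M v"
begin

lemma qform_nonneg_on_null_cone:
  assumes pos: "0 < qform N v" and null: "qform N w = 0"
  shows "0 \<le> qform M w"
proof -
  obtain u where u: "0 < qform N u" "0 \<le> w \<bullet> (N *v u)"
  proof (cases "0 \<le> w \<bullet> (N *v v)")
    case True
    then show ?thesis using pos that by blast
  next
    case False
    then show ?thesis using pos that[of "- v"] by (simp add: qform_def linear_neg[OF matrix_vector_mul_linear])
  qed
  have nonneg: "0 \<le> qform M (w + t *\<^sub>R u)" if "0 < t" for t
  proof (rule nonneg_on_pos)
    show "0 < qform N (w + t *\<^sub>R u)"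
      using that u by (simp add: qform_add_scaleR[OF sym_N] null, intro add_nonneg_pos) simp_all
  qed
  have "\<forall>\<^sub>F t in at_right 0. 0 \<le> qform M (w + t *\<^sub>R u)"
    using eventually_at_right_less by (rule eventually_mono) (rule nonneg)
  then show ?thesis by (rule qform_nonneg_if_eventually_nonneg)
qed

lemma qform_cross_nonneg:
  assumes u: "qform N u < 0" and v: "0 < qform N v"
  shows "0 \<le> qform M u * qform N v - qform M v * qform N u"
proof -
  define a b \<beta> \<mu> where "a = qform N v" and "b = u \<bullet> (N *v v)"
    and "\<beta> = u \<bullet> (M *v v)" and "\<mu> = qform M v"
  obtain t1 t2 where t: "t1 < 0" "0 < t2"
    and roots: "qform N u + 2 * b * t1 + a * t1\<^sup>2 = 0" "qform N u + 2 * b * t2 + a * t2\<^sup>2 = 0"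
    using quadratic_roots_opposite_signs[of a "qform N u" b] u v a_def by blast
  \<comment> \<open>\<open>a M - \<mu> N\<close> vanishes at \<open>v\<close>, so its form along \<open>u + t v\<close> is affine in \<open>t\<close>\<close>
  have affine: "0 \<le> (a * qform M u - \<mu> * qform N u) + 2 * (a * \<beta> - \<mu> * b) * t"
    if root: "qform N u + 2 * b * t + a * t\<^sup>2 = 0" for t
  proof -
    have "qform N (u + t *\<^sub>R v) = 0"
      using root by (simp add: qform_add_scaleR[OF sym_N] a_def b_def mult_ac)
    then have "0 \<le> qform M (u + t *\<^sub>R v)" by (rule qform_nonneg_on_null_cone[OF v])
    then have "0 \<le> a * (qform M u + 2 * t * \<beta> + t\<^sup>2 * \<mu>)"
      using v by (simp add: qform_add_scaleR[OF sym_M] a_def \<beta>_def \<mu>_def)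
    also have "\<dots> = (a * qform M u - \<mu> * qform N u) + 2 * (a * \<beta> - \<mu> * b) * t
        + \<mu> * (qform N u + 2 * b * t + a * t\<^sup>2)"
      by (simp add: algebra_simps)
    finally show ?thesis using root by simp
  qed
  have "0 \<le> a * qform M u - \<mu> * qform N u"
    using affine_nonneg_between[OF t affine[OF roots(1)] affine[OF roots(2)]] .
  then show ?thesis by (simp add: a_def \<mu>_def mult.commute)
qed

lemma S_lemma:
  assumes "0 < qform N v"
  shows "\<exists>\<alpha>\<ge>0. psd (M - \<alpha> *\<^sub>R N)"
proof -
  define S where "S = {qform M u / qform N u | u. 0 < qform N u}"
  define \<alpha> where "\<alpha> = Inf S"
  have "S \<noteq> {}" using assms by (auto simp: S_def)
  have S_nonneg: "0 \<le> s" if "s \<in> S" for s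
    using that nonneg_on_pos by (auto simp: S_def)
  then have "bdd_below S" by (meson bdd_below_def)
  have "0 \<le> \<alpha>" unfolding \<alpha>_def using \<open>S \<noteq> {}\<close> S_nonneg by (rule cInf_greatest)
  have "\<alpha> * qform N x \<le> qform M x" for x
  proof (cases "qform N x" "0::real" rule: linorder_cases)
    case greater
    then have "\<alpha> \<le> qform M x / qform N x"
      unfolding \<alpha>_def using \<open>bdd_below S\<close> by (intro cInf_lower) (auto simp: S_def)
    then show ?thesis using greater by (simp add: pos_le_divide_eq)
  next
    case equal
    then show ?thesis using qform_nonneg_on_null_cone[OF assms] by simp
  next
    case less
    have "qform M x / qform N x \<le> \<alpha>"
      unfolding \<alpha>_def using \<open>S \<noteq> {}\<close>
    proof (rule cInf_greatest)
      fix s assume "s \<in> S"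
      then obtain u where u: "0 < qform N u" "s = qform M u / qform N u" by (auto simp: S_def)
      have "qform M u * qform N x \<le> qform M x * qform N u"
        using qform_cross_nonneg[OF less u(1)] by simp
      then show "qform M x / qform N x \<le> s"
        using less u by (simp add: neg_divide_le_eq pos_le_divide_eq mult.commute)
    qed
    then show ?thesis using less by (simp add: neg_divide_le_eq)
  qed
  then have "psd (M - \<alpha> *\<^sub>R N)"
    by (simp add: psd_iff_qform qform_diff_scaleR symmetric_mat_diff_scaleR[OF sym_M sym_N])
  then show ?thesis using \<open>0 \<le> \<alpha>\<close> by blast
qed

end

lemma pd_imp_coercive:
  fixes A :: "real^'k^'k"
  assumes "pd A"
  obtains l where "0 < l" "\<And>h. l * (norm h)\<^sup>2 \<le> h \<bullet> (A *v h)"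
proof -
  have cont: "continuous_on (sphere 0 1) (\<lambda>h::real^'k. h \<bullet> (A *v h))"
    by (intro continuous_intros)
  have "sphere (0::real^'k) 1 \<noteq> {}"
    using vector_choose_size[of 1] by (auto simp: sphere_def)
  then obtain h0 where h0: "h0 \<in> sphere 0 1"
    and min: "\<And>g. g \<in> sphere 0 1 \<Longrightarrow> h0 \<bullet> (A *v h0) \<le> g \<bullet> (A *v g)"
    using continuous_attains_inf[OF compact_sphere _ cont] by blast
  show ?thesis
  proof (rule that)
    have "h0 \<noteq> 0" using h0 by auto
    then show "0 < h0 \<bullet> (A *v h0)" using assms unfolding pd_def by blast
    fix h :: "real^'k"
    show "h0 \<bullet> (A *v h0) * (norm h)\<^sup>2 \<le> h \<bullet> (A *v h)"
    proof (cases "h = 0")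
      case False
      define g where "g = (1 / norm h) *\<^sub>R h"
      have "h = norm h *\<^sub>R g" using False by (simp add: g_def)
      then have "h \<bullet> (A *v h) = (norm h)\<^sup>2 * (g \<bullet> (A *v g))"
        by (metis inner_scaleR_left inner_scaleR_right matrix_vector_mult_scaleR power2_eq_square
            mult.assoc)
      moreover have "h0 \<bullet> (A *v h0) \<le> g \<bullet> (A *v g)" using False by (intro min) (simp add: g_def)
      ultimately show ?thesis by (metis mult.commute mult_right_mono zero_le_power2)
    qed simp
  qed
qed

lemma exists_functional_small_on_kernel:
  fixes c x :: "'a::real_inner"
  assumes "x \<noteq> 0" and "0 < r"
  obtains w where "w \<bullet> x = 1" "\<And>h. w \<bullet> h = 0 \<Longrightarrow> \<bar>c \<bullet> h\<bar> \<le> r * norm h"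
proof -
  define \<epsilon>0 where "\<epsilon>0 = r / norm x"
  have "0 < \<epsilon>0" using assms by (simp add: \<epsilon>0_def)
  have "0 < \<epsilon>0 * (x \<bullet> x)" using \<open>0 < \<epsilon>0\<close> assms(1) by simp
  \<comment> \<open>\<open>w\<close> is a multiple of \<open>c + \<epsilon> x\<close>, so \<open>c \<bullet> h = - \<epsilon> (x \<bullet> h)\<close> on its kernel;
    halving \<open>\<epsilon>0\<close> if necessary keeps the normalising constant \<open>d\<close> nonzero\<close>
  obtain \<epsilon> where \<epsilon>: "0 < \<epsilon>" "\<epsilon> \<le> \<epsilon>0" and "c \<bullet> x + \<epsilon> * (x \<bullet> x) \<noteq> 0"
  proof (cases "c \<bullet> x + \<epsilon>0 * (x \<bullet> x) = 0")
    case True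
    have "c \<bullet> x + \<epsilon>0 / 2 * (x \<bullet> x) = - (\<epsilon>0 * (x \<bullet> x)) / 2" using True by simp
    then show ?thesis using \<open>0 < \<epsilon>0 * (x \<bullet> x)\<close> \<open>0 < \<epsilon>0\<close> by (intro that[of "\<epsilon>0 / 2"]) simp_all
  qed (use \<open>0 < \<epsilon>0\<close> in auto)
  define d where "d = c \<bullet> x + \<epsilon> * (x \<bullet> x)"
  have "d \<noteq> 0" using \<open>c \<bullet> x + \<epsilon> * (x \<bullet> x) \<noteq> 0\<close> by (simp add: d_def)
  show ?thesis
  proof (rule that[of "(1 / d) *\<^sub>R (c + \<epsilon> *\<^sub>R x)"])
    show "(1 / d) *\<^sub>R (c + \<epsilon> *\<^sub>R x) \<bullet> x = 1"
      using \<open>d \<noteq> 0\<close> by (simp add: inner_add_left d_def)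
    fix h assume "(1 / d) *\<^sub>R (c + \<epsilon> *\<^sub>R x) \<bullet> h = 0"
    then have "(c + \<epsilon> *\<^sub>R x) \<bullet> h = 0" using \<open>d \<noteq> 0\<close> by simp
    then have "c \<bullet> h = - \<epsilon> * (x \<bullet> h)" by (simp add: inner_add_left eq_neg_iff_add_eq_0)
    then have "\<bar>c \<bullet> h\<bar> \<le> \<epsilon> * (norm x * norm h)"
      using \<epsilon> Cauchy_Schwarz_ineq2[of x h] by (simp add: abs_mult mult_left_mono)
    also have "\<dots> \<le> \<epsilon>0 * norm x * norm h"
      using \<epsilon> by (simp add: mult_right_mono mult.assoc)
    also have "\<dots> = r * norm h" using assms(1) by (simp add: \<epsilon>0_def)
    finally show "\<bar>c \<bullet> h\<bar> \<le> r * norm h" .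
  qed
qed

definition top_block :: "real^('k::finite + 'n::finite) \<Rightarrow> real^'k" where
  "top_block v = (\<chi> i. v $ Inl i)"

lemma stackI_mult_vec:
  "stackI Z *v u = (\<chi> r. case r of Inl i \<Rightarrow> u $ i | Inr j \<Rightarrow> (Z *v u) $ j)"
proof -
  have "(stackI Z *v u) $ r = (case r of Inl i \<Rightarrow> u $ i | Inr j \<Rightarrow> (Z *v u) $ j)" for r
  proof (cases r)
    case (Inl i)
    have "(stackI Z *v u) $ r = (mat 1 *v u) $ i"
      by (simp add: Inl matrix_vector_mult_def stackI_def)
    then show ?thesis by (simp add: Inl)
  qed (simp add: matrix_vector_mult_def stackI_def)
  then show ?thesis by (simp add: vec_eq_iff)
qed

lemma stackI_rank_one_update:
  "stackI (\<chi> j. \<chi> i. Z $ j $ i + y $ j * w $ i) *v u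
     = stackI Z *v u + (w \<bullet> u) *\<^sub>R (\<chi> r. case r of Inl _ \<Rightarrow> 0 | Inr j \<Rightarrow> y $ j)"
proof -
  have "((\<chi> j. \<chi> i. Z $ j $ i + y $ j * w $ i) *v u) $ j = (Z *v u) $ j + y $ j * (w \<bullet> u)" for j
    by (simp add: matrix_vector_mult_def inner_vec_def distrib_right sum.distrib
        sum_distrib_left mult.assoc)
  then show ?thesis by (simp add: vec_eq_iff stackI_mult_vec split: sum.split)
qed

lemma exists_pd_quadform_through:
  fixes N :: "real^('k::finite + 'n::finite)^('k + 'n)" and Zb :: "real^'k^'n"
  assumes sym_N: "symmetric_mat N" and pd_Zb: "pd (quadform N Zb)"
    and pos: "0 < qform N v" and top: "top_block v \<noteq> 0"
  obtains Z :: "real^'k^'n" where "pd (quadform N Z)" "stackI Z *v top_block v = v"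
proof -
  define x P where "x = top_block v" and "P = stackI Zb"
  define y where "y = (\<chi> j. v $ Inr j) - Zb *v x"
  define e :: "real^('k + 'n)" where "e = (\<chi> r. case r of Inl _ \<Rightarrow> 0 | Inr j \<Rightarrow> y $ j)"
  have v_eq: "P *v x + e = v"
    by (simp add: vec_eq_iff P_def stackI_mult_vec e_def y_def x_def top_block_def split: sum.split)
  obtain l where "0 < l" and coercive: "\<And>h. l * (norm h)\<^sup>2 \<le> qform N (P *v h)"
    using pd_imp_coercive[OF pd_Zb] by (metis qform_quadform P_def)
  define a r where "a = qform N v" and "r = sqrt (a * l / 2)"
  have "0 < a * l" using pos \<open>0 < l\<close> by (simp add: a_def)
  then have "0 < r" "r\<^sup>2 = a * l / 2" by (simp_all add: r_def)
  then have "r\<^sup>2 < a * l" using \<open>0 < a * l\<close> by linarith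
  define c where "c = transpose P *v (N *v v)"
  have c: "c \<bullet> h = (P *v h) \<bullet> (N *v v)" for h
    by (metis c_def dot_lmul_matrix inner_commute vector_transpose_matrix)
  obtain w where wx: "w \<bullet> x = 1" and small: "\<And>h. w \<bullet> h = 0 \<Longrightarrow> \<bar>c \<bullet> h\<bar> \<le> r * norm h"
    using exists_functional_small_on_kernel[of x r c] top \<open>0 < r\<close> x_def by blast
  define Z :: "real^'k^'n" where "Z = (\<chi> j. \<chi> i. Zb $ j $ i + y $ j * w $ i)"
  have Z: "stackI Z *v u = P *v u + (w \<bullet> u) *\<^sub>R e" for u
    unfolding Z_def P_def e_def by (rule stackI_rank_one_update)
  have "0 < u \<bullet> (quadform N Z *v u)" if "u \<noteq> 0" for u
  proof -
    define s h where "s = w \<bullet> u" and "h = u - s *\<^sub>R x"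
    have "w \<bullet> h = 0" by (simp add: h_def s_def inner_diff_right wx)
    have "stackI Z *v u = P *v h + s *\<^sub>R v"
      by (simp add: Z h_def s_def matrix_vector_mult_diff_distrib algebra_simps v_eq[symmetric])
    then have "u \<bullet> (quadform N Z *v u) = qform N (P *v h) + 2 * s * (c \<bullet> h) + s\<^sup>2 * a"
      by (simp add: qform_quadform qform_add_scaleR[OF sym_N] c a_def)
    also have "0 < \<dots>"
    proof (rule binary_quadratic_pos)
      show "0 < l" "r\<^sup>2 < a * l" by fact+
      show "\<bar>c \<bullet> h\<bar> \<le> r * norm h" using \<open>w \<bullet> h = 0\<close> by (rule small)
      show "l * (norm h)\<^sup>2 \<le> qform N (P *v h)" by (rule coercive)
      show "s \<noteq> 0 \<or> 0 < norm h" using \<open>u \<noteq> 0\<close> by (auto simp: h_def)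
    qed
    finally show ?thesis .
  qed
  then have "pd (quadform N Z)"
    unfolding pd_def quadform_def using symmetric_mat_congruence[OF sym_N] by blast
  moreover have "stackI Z *v x = v" using Z[of x] wx v_eq by simp
  ultimately show ?thesis unfolding x_def by (rule that)
qed

lemma qform_nonneg_of_pd_imp_psd:
  fixes M N :: "real^('k::finite + 'n::finite)^('k + 'n)"
  assumes sym_N: "symmetric_mat N" and pd_Zb: "pd (quadform N (Zb :: real^'k^'n))"
    and pd_imp_psd_M: "\<And>Z :: real^'k^'n. pd (quadform N Z) \<Longrightarrow> psd (quadform M Z)"
    and pos: "0 < qform N v"
  shows "0 \<le> qform M v"
proof -
  have top_nonzero_case: "0 \<le> qform M u" if u: "0 < qform N u" "top_block u \<noteq> 0" for u
  proof -
    obtain Z :: "real^'k^'n" where "pd (quadform N Z)" "stackI Z *v top_block u = u"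
      using exists_pd_quadform_through[OF sym_N pd_Zb u] .
    then show ?thesis using pd_imp_psd_M by (metis psd_def qform_quadform)
  qed
  show ?thesis
  proof (cases "top_block v = 0")
    case True
    define f :: "real^('k + 'n)" where "f = axis (Inl undefined) 1"
    have top_nonzero: "top_block (v + t *\<^sub>R f) \<noteq> 0" if "0 < t" for t
    proof -
      have "top_block (v + t *\<^sub>R f) $ undefined = t"
        using True that by (simp add: top_block_def f_def vec_eq_iff)
      then show ?thesis using that by auto
    qed
    have "\<forall>\<^sub>F t in at_right 0. 0 \<le> qform M (v + t *\<^sub>R f)"
      using eventually_qform_pos[OF pos, of f] eventually_at_right_less
      by eventually_elim (use top_nonzero top_nonzero_case in blast)
    then show ?thesis by (rule qform_nonneg_if_eventually_nonneg)
  qed (use pos top_nonzero_case in blast)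
qed

lemma psd_quadform_if_psd_combination:
  assumes sym_M: "symmetric_mat M" and "0 \<le> \<alpha>" and "psd (M - \<alpha> *\<^sub>R N)"
    and "psd (quadform N Z)"
  shows "psd (quadform M Z)"
proof -
  have "0 \<le> qform M (stackI Z *v x)" for x
  proof -
    have "0 \<le> qform (M - \<alpha> *\<^sub>R N) (stackI Z *v x)"
      using assms(3) by (simp add: psd_iff_qform)
    moreover have "0 \<le> qform N (stackI Z *v x)"
      using assms(4) by (simp add: psd_def qform_quadform[symmetric])
    ultimately show ?thesis using \<open>0 \<le> \<alpha>\<close>
      by (simp add: qform_diff_scaleR) (meson add_nonneg_nonneg diff_ge_0_iff_ge mult_nonneg_nonneg order.trans)
  qed
  then show ?thesis
    using symmetric_mat_congruence[OF sym_M]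
    by (simp add: psd_def quadform_def qform_congruence)
qed

theorem theorem4:
  fixes M N :: "real^('k::finite + 'n::finite)^('k + 'n)"
  assumes "symmetric_mat M" and "symmetric_mat N"
    and "\<exists>Zb :: real^'k^'n. pd (quadform N Zb)"
  shows "((\<forall>Z :: real^'k^'n. psd (quadform N Z) \<longrightarrow> psd (quadform M Z))
          \<longleftrightarrow> (\<forall>Z :: real^'k^'n. pd (quadform N Z) \<longrightarrow> psd (quadform M Z)))
       \<and> ((\<forall>Z :: real^'k^'n. pd (quadform N Z) \<longrightarrow> psd (quadform M Z))
          \<longleftrightarrow> (\<exists>\<alpha>::real. \<alpha> \<ge> 0 \<and> psd (M - \<alpha> *\<^sub>R N)))"
proof -
  note sym_M = assms(1) and sym_N = assms(2)
  obtain Zb :: "real^'k^'n" where pd_Zb: "pd (quadform N Zb)" using assms(3) by blast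
  have "0 < qform N (stackI Zb *v axis undefined 1)"
    using pd_Zb by (simp add: pd_def axis_eq_0_iff qform_quadform[symmetric])
  then have "\<exists>\<alpha>\<ge>0. psd (M - \<alpha> *\<^sub>R N)"
    if II: "\<forall>Z :: real^'k^'n. pd (quadform N Z) \<longrightarrow> psd (quadform M Z)"
    using S_lemma[OF sym_M sym_N qform_nonneg_of_pd_imp_psd[OF sym_N pd_Zb]] II by blast
  moreover have "psd (quadform M Z)"
    if "\<exists>\<alpha>\<ge>0. psd (M - \<alpha> *\<^sub>R N)" and "psd (quadform N Z)" for Z :: "real^'k^'n"
    using that psd_quadform_if_psd_combination[OF sym_M] by blast
  ultimately show ?thesis using pd_imp_psd by blast
qed

end
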